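(* There exist an integer $d \ge 1$ and two finite graphs $G_1, G_2$ with distinguished nodes $u_1 \in V(G_1)$, $u_2 \in V(G_2)$, all nodes carrying the same (identical) feature, such that the $d$-hop neighborhoods $N_d(u_1)$ and $N_d(u_2)$ are not isomorphic as rooted graphs (rooted at $u_1$, $u_2$), and yet for each $k \in \{1,2\}$ the multisets $$\big\{\!\!\big\{\, T_d\big(N_d(u_i) - S,\, u_i\big) \;:\; S \subseteq V(N_d(u_i)) \setminus \{u_i\},\ |S| = k \,\big\}\!\!\big\}, \qquad i = 1,2,$$ coincide (where trees are compared up to isomorphism of rooted trees).
   Context: For a graph $G$ and node $u$, the $d$-hop neighborhood $N_d(u)$ is the graph whose nodes are all nodes at distance at most $d$ from $u$, and whose edges are all edges of $G$ between these nodes except those edges whose both endpoints are at distance exactly $d$ from $u$; it is regarded as rooted at $u$. For a graph $H$ and $S \subseteq V(H)$, $H - S$ denotes $H$ with the nodes of $S$ and their incident edges removed. The depth-$d$ unfolding (computation) tree $T_d(H, v)$ of a node $v$ of $H$ is defined recursively: $T_0(H,v)$ is a single root node, and $T_d(H,v)$ is a root node whose children are the roots of the trees $T_{d-1}(H,w)$, one for each neighbor $w$ of $v$ in $H$. $T_d(H - S, u)$ describes exactly what $u$ can observe after $d$ rounds of message passing (with sum aggregation, i.e. equivalently to the Weisfeiler–Lehman test) in a run of a dropout GNN in which exactly the nodes of $S$ are dropped; a subset $S$ of size $k$ dropped is called a $k$-dropout. *)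

theory Defs
  imports Main "HOL-Library.Multiset"
begin

type_synonym 'a graph = "'a set \<times> ('a \<Rightarrow> 'a \<Rightarrow> bool)"

definition verts :: "'a graph \<Rightarrow> 'a set" where "verts G = fst G"
definition adj :: "'a graph \<Rightarrow> 'a \<Rightarrow> 'a \<Rightarrow> bool" where "adj G = snd G"

definition finite_graph :: "'a graph \<Rightarrow> bool" where
  "finite_graph G \<longleftrightarrow> finite (verts G)
     \<and> (\<forall>x y. adj G x y \<longrightarrow> x \<in> verts G \<and> y \<in> verts G)
     \<and> (\<forall>x y. adj G x y \<longrightarrow> adj G y x)
     \<and> (\<forall>x. \<not> adj G x x)"

fun within :: "'a graph \<Rightarrow> 'a \<Rightarrow> nat \<Rightarrow> 'a \<Rightarrow> bool" where
  "within G u 0 v \<longleftrightarrow> v = u \<and> u \<in> verts G"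
| "within G u (Suc k) v \<longleftrightarrow> within G u k v \<or> (\<exists>w. within G u k w \<and> adj G w v \<and> v \<in> verts G)"

definition dist_exactly :: "'a graph \<Rightarrow> 'a \<Rightarrow> nat \<Rightarrow> 'a \<Rightarrow> bool" where
  "dist_exactly G u d v \<longleftrightarrow> within G u d v \<and> (d = 0 \<or> \<not> within G u (d - 1) v)"

definition nbhd :: "'a graph \<Rightarrow> 'a \<Rightarrow> nat \<Rightarrow> 'a graph" where
  "nbhd G u d = ({v. within G u d v},
     (\<lambda>x y. adj G x y \<and> within G u d x \<and> within G u d y
            \<and> \<not> (dist_exactly G u d x \<and> dist_exactly G u d y)))"

definition del_nodes :: "'a graph \<Rightarrow> 'a set \<Rightarrow> 'a graph" where
  "del_nodes H S = (verts H - S, (\<lambda>x y. adj H x y \<and> x \<notin> S \<and> y \<notin> S))"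

definition rooted_iso :: "'a graph \<Rightarrow> 'a \<Rightarrow> 'b graph \<Rightarrow> 'b \<Rightarrow> bool" where
  "rooted_iso G u H v \<longleftrightarrow> (\<exists>f. bij_betw f (verts G) (verts H) \<and> f u = v
      \<and> (\<forall>x\<in>verts G. \<forall>y\<in>verts G. adj G x y \<longleftrightarrow> adj H (f x) (f y)))"

text \<open>Unordered rooted trees up to isomorphism: a node is the multiset of its child subtrees.
  Two rooted trees are isomorphic iff their representations are equal.\<close>
datatype utree = UNode "utree multiset"

fun unfold_tree :: "nat \<Rightarrow> 'a graph \<Rightarrow> 'a \<Rightarrow> utree" where
  "unfold_tree 0 H v = UNode {#}"
| "unfold_tree (Suc d) H v =
     UNode (image_mset (\<lambda>w. unfold_tree d H w) (mset_set {w \<in> verts H. adj H v w}))"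

definition dropout_trees :: "'a graph \<Rightarrow> 'a \<Rightarrow> nat \<Rightarrow> nat \<Rightarrow> utree multiset" where
  "dropout_trees G u d k =
     (let N = nbhd G u d in
      image_mset (\<lambda>S. unfold_tree d (del_nodes N S) u)
        (mset_set {S. S \<subseteq> verts N - {u} \<and> card S = k}))"

end

theory Submission
  imports Defs
begin

text \<open>Take d = 2 and the two wheels with ten spokes, rooted at the hub, whose rims are two
  disjoint pentagons and a decagon. Every node is adjacent to the hub, so the 2-hop
  neighbourhoods are the whole wheels, and these are not isomorphic since only the first rim
  contains an odd cycle. On the other hand, the depth-2 unfolding tree of the hub only records
  the degrees of the surviving rim nodes. Both rims are 2-regular, so these degrees only depend
  on whether the dropped rim nodes are adjacent, at distance two, or further apart, and both
  rims have 10, 10 and 25 such pairs respectively. Hence the dropout multisets agree for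
  k = 1, 2; this final count is checked by evaluation.\<close>

lemma within_in_verts: "within G u k v \<Longrightarrow> v \<in> verts G"
  by (induction k) auto

lemma within_mono: "within G u k v \<Longrightarrow> k \<le> m \<Longrightarrow> within G u m v"
  by (induction m) (auto simp: le_Suc_eq)

lemma nbhd_eq_self:
  assumes "finite_graph G" and "1 \<le> d" and "\<forall>v\<in>verts G. within G u (d - 1) v"
  shows "nbhd G u d = G"
proof -
  have within_d: "within G u d v \<longleftrightarrow> v \<in> verts G" for v
  proof
    assume "v \<in> verts G"
    then have "within G u (d - 1) v" using assms(3) by blast
    then show "within G u d v" by (rule within_mono) simp
  qed (rule within_in_verts)
  have not_at_d: "\<not> dist_exactly G u d v" for v
    unfolding dist_exactly_def within_d using assms(2,3) by auto
  have "adj G x y \<Longrightarrow> x \<in> verts G \<and> y \<in> verts G" for x y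
    using assms(1) unfolding finite_graph_def by blast
  then have "nbhd G u d = (verts G, adj G)"
    unfolding nbhd_def within_d by (auto simp: not_at_d)
  then show ?thesis by (simp add: verts_def adj_def)
qed

definition cone :: "'a \<Rightarrow> 'a graph \<Rightarrow> 'a graph" where
  "cone u R = (insert u (verts R),
     \<lambda>x y. adj R x y \<or> (x = u \<and> y \<in> verts R) \<or> (y = u \<and> x \<in> verts R))"

lemma verts_cone [simp]: "verts (cone u R) = insert u (verts R)"
  by (simp add: cone_def verts_def)

lemma adj_cone [simp]:
  "adj (cone u R) x y \<longleftrightarrow> adj R x y \<or> (x = u \<and> y \<in> verts R) \<or> (y = u \<and> x \<in> verts R)"
  by (simp add: cone_def adj_def)

lemma finite_graph_cone:
  assumes "finite_graph R" and "u \<notin> verts R"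
  shows "finite_graph (cone u R)"
  using assms unfolding finite_graph_def by auto

lemma nbhd_cone:
  assumes "finite_graph R" and "u \<notin> verts R" and "2 \<le> d"
  shows "nbhd (cone u R) u d = cone u R"
proof (rule nbhd_eq_self)
  show "\<forall>v\<in>verts (cone u R). within (cone u R) u (d - 1) v"
    using assms(3) within_mono[of "cone u R" u 1 _ "d - 1"] by auto
qed (use assms finite_graph_cone in simp_all)

definition graph_union :: "'a graph \<Rightarrow> 'a graph \<Rightarrow> 'a graph" where
  "graph_union G H = (verts G \<union> verts H, \<lambda>x y. adj G x y \<or> adj H x y)"

lemma verts_graph_union [simp]: "verts (graph_union G H) = verts G \<union> verts H"
  by (simp add: graph_union_def verts_def)

lemma adj_graph_union [simp]: "adj (graph_union G H) x y \<longleftrightarrow> adj G x y \<or> adj H x y"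
  by (simp add: graph_union_def adj_def)

lemma finite_graph_union:
  "finite_graph G \<Longrightarrow> finite_graph H \<Longrightarrow> finite_graph (graph_union G H)"
  unfolding finite_graph_def by auto

definition cycle_succ :: "nat \<Rightarrow> nat \<Rightarrow> nat \<Rightarrow> nat" where
  "cycle_succ a n x = (if x + 1 = a + n then a else x + 1)"

definition cycle_graph :: "nat \<Rightarrow> nat \<Rightarrow> nat graph" where
  "cycle_graph a n = ({a..<a + n},
     \<lambda>x y. x \<in> {a..<a + n} \<and> y \<in> {a..<a + n} \<and> (y = cycle_succ a n x \<or> x = cycle_succ a n y))"

lemma verts_cycle_graph [simp]: "verts (cycle_graph a n) = {a..<a + n}"
  by (simp add: cycle_graph_def verts_def)

lemma adj_cycle_graph:
  "adj (cycle_graph a n) x y \<longleftrightarrow>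
     x \<in> {a..<a + n} \<and> y \<in> {a..<a + n} \<and> (y = cycle_succ a n x \<or> x = cycle_succ a n y)"
  by (simp add: cycle_graph_def adj_def)

lemma finite_graph_cycle_graph:
  assumes "2 \<le> n"
  shows "finite_graph (cycle_graph a n)"
proof -
  have "x \<noteq> cycle_succ a n x" if "x \<in> {a..<a + n}" for x
    using that assms by (auto simp: cycle_succ_def)
  then show ?thesis unfolding finite_graph_def adj_cycle_graph by auto
qed

definition bipartite_on :: "'a graph \<Rightarrow> 'a set \<Rightarrow> bool" where
  "bipartite_on G A \<longleftrightarrow> (\<exists>c :: 'a \<Rightarrow> bool. \<forall>x\<in>A. \<forall>y\<in>A. adj G x y \<longrightarrow> c x \<noteq> c y)"

lemma rooted_iso_bipartite_off_root:
  assumes "rooted_iso G u H v" and "u \<in> verts G" and "bipartite_on H (verts H - {v})"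
  shows "bipartite_on G (verts G - {u})"
proof -
  obtain f where f: "bij_betw f (verts G) (verts H)" "f u = v"
    and f_adj: "\<forall>x\<in>verts G. \<forall>y\<in>verts G. adj G x y \<longleftrightarrow> adj H (f x) (f y)"
    using assms(1) unfolding rooted_iso_def by blast
  obtain c :: "'b \<Rightarrow> bool" where c: "\<forall>x\<in>verts H - {v}. \<forall>y\<in>verts H - {v}. adj H x y \<longrightarrow> c x \<noteq> c y"
    using assms(3) unfolding bipartite_on_def by blast
  have f_off_root: "f x \<in> verts H - {v}" if "x \<in> verts G - {u}" for x
  proof -
    from that have x: "x \<in> verts G" "x \<noteq> u" by simp_all
    have "f x \<noteq> f u"
      by (rule inj_on_contraD[OF bij_betw_imp_inj_on[OF f(1)] x(2,1) assms(2)])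
    moreover have "f x \<in> verts H"
      using bij_betwE[OF f(1)] x(1) by blast
    ultimately show ?thesis
      using f(2) by simp
  qed
  have "c (f x) \<noteq> c (f y)" if "x \<in> verts G - {u}" "y \<in> verts G - {u}" "adj G x y" for x y
  proof -
    have "adj H (f x) (f y)"
      using f_adj that by simp
    then show ?thesis
      using c f_off_root[OF that(1)] f_off_root[OF that(2)] by simp
  qed
  then show ?thesis
    unfolding bipartite_on_def by (intro exI[of _ "\<lambda>x. c (f x)"]) simp
qed

lemma pentagon_not_bipartite:
  assumes "{a, b, c, d, e} \<subseteq> A"
    and "adj G a b" "adj G b c" "adj G c d" "adj G d e" "adj G e a"
  shows "\<not> bipartite_on G A"
proof
  assume "bipartite_on G A"
  then obtain col :: "'a \<Rightarrow> bool" where "\<forall>x\<in>A. \<forall>y\<in>A. adj G x y \<longrightarrow> col x \<noteq> col y"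
    unfolding bipartite_on_def by blast
  then have "col a \<noteq> col b" "col b \<noteq> col c" "col c \<noteq> col d" "col d \<noteq> col e" "col e \<noteq> col a"
    using assms by auto
  then show False by blast
qed

lemma bipartite_on_cong:
  "\<forall>x\<in>A. \<forall>y\<in>A. adj G x y \<longleftrightarrow> adj H x y \<Longrightarrow> bipartite_on G A \<longleftrightarrow> bipartite_on H A"
  unfolding bipartite_on_def by simp

lemma bipartite_on_cone:
  "u \<notin> verts R \<Longrightarrow> bipartite_on (cone u R) (verts R) \<longleftrightarrow> bipartite_on R (verts R)"
  by (rule bipartite_on_cong) auto

lemma bipartite_cycle_graph:
  assumes "even n"
  shows "bipartite_on (cycle_graph a n) {a..<a + n}"
proof -
  have parity: "even (cycle_succ a n x - a) \<longleftrightarrow> odd (x - a)" if "x \<in> {a..<a + n}" for x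
  proof (cases "x + 1 = a + n")
    case True
    then have "x - a = n - 1" by simp
    moreover have "odd (n - 1)" using assms that True by simp
    ultimately show ?thesis using True by (simp add: cycle_succ_def)
  next
    case False
    then show ?thesis using that by (simp add: cycle_succ_def Suc_diff_le)
  qed
  have "even (x - a) \<noteq> even (y - a)"
    if "x \<in> {a..<a + n}" "y \<in> {a..<a + n}" "adj (cycle_graph a n) x y" for x y
  proof -
    have "y = cycle_succ a n x \<or> x = cycle_succ a n y"
      using that(3) unfolding adj_cycle_graph by blast
    then show ?thesis
      using parity[OF that(1)] parity[OF that(2)] by blast
  qed
  then show ?thesis
    unfolding bipartite_on_def by (intro exI[of _ "\<lambda>x. even (x - a)"]) blast
qed

fun subsets_of_card :: "nat \<Rightarrow> 'a list \<Rightarrow> 'a set list" where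
  "subsets_of_card 0 xs = [{}]"
| "subsets_of_card (Suc k) [] = []"
| "subsets_of_card (Suc k) (x # xs) =
     map (insert x) (subsets_of_card k xs) @ subsets_of_card (Suc k) xs"

lemma subsets_of_card_subset: "S \<in> set (subsets_of_card k xs) \<Longrightarrow> S \<subseteq> set xs"
  by (induction k xs arbitrary: S rule: subsets_of_card.induct) auto

lemma set_subsets_of_card:
  "distinct xs \<Longrightarrow> set (subsets_of_card k xs) = {S. S \<subseteq> set xs \<and> card S = k}"
proof (induction k xs rule: subsets_of_card.induct)
  case (1 xs)
  then show ?case
    using finite_subset by fastforce
next
  case (2 k)
  then show ?case by simp
next
  case (3 k x xs)
  then have "x \<notin> set xs" "distinct xs" by simp_all
  have "{S. S \<subseteq> insert x (set xs) \<and> card S = Suc k} =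
      insert x ` {S. S \<subseteq> set xs \<and> card S = k} \<union> {S. S \<subseteq> set xs \<and> card S = Suc k}"
  proof (intro equalityI subsetI)
    fix S assume S: "S \<in> {S. S \<subseteq> insert x (set xs) \<and> card S = Suc k}"
    show "S \<in> insert x ` {S. S \<subseteq> set xs \<and> card S = k} \<union> {S. S \<subseteq> set xs \<and> card S = Suc k}"
    proof (cases "x \<in> S")
      case True
      then have "S = insert x (S - {x})" and "card (S - {x}) = k"
        using S finite_subset[of S "insert x (set xs)"] by auto
      then show ?thesis
        using S by blast
    qed (use S in blast)
  next
    fix S assume "S \<in> insert x ` {S. S \<subseteq> set xs \<and> card S = k} \<union> {S. S \<subseteq> set xs \<and> card S = Suc k}"
    then show "S \<in> {S. S \<subseteq> insert x (set xs) \<and> card S = Suc k}"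
    proof
      assume "S \<in> insert x ` {S. S \<subseteq> set xs \<and> card S = k}"
      then obtain T where T: "T \<subseteq> set xs" "card T = k" "S = insert x T" by blast
      moreover have "finite T" "x \<notin> T"
        using T(1) \<open>x \<notin> set xs\<close> finite_subset by auto
      ultimately show ?thesis by auto
    qed blast
  qed
  then show ?case
    using 3 \<open>distinct xs\<close> by simp
qed

lemma distinct_subsets_of_card: "distinct xs \<Longrightarrow> distinct (subsets_of_card k xs)"
proof (induction k xs rule: subsets_of_card.induct)
  case (3 k x xs)
  then have x: "x \<notin> set xs" and "distinct xs" by simp_all
  have "x \<notin> S" if "S \<in> set (subsets_of_card k xs)" for S
    using that x subsets_of_card_subset by blast
  then have "inj_on (insert x) (set (subsets_of_card k xs))"
    by (intro inj_onI) (simp add: insert_ident)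
  moreover have "x \<notin> S" if "S \<in> set (subsets_of_card (Suc k) xs)" for S
    using that x subsets_of_card_subset by blast
  ultimately show ?case
    using 3 \<open>distinct xs\<close> by (auto simp: distinct_map)
qed simp_all

lemma mset_set_subsets_of_card:
  "distinct xs \<Longrightarrow> mset_set {S. S \<subseteq> set xs \<and> card S = k} = mset (subsets_of_card k xs)"
  by (simp flip: set_subsets_of_card add: mset_set_set distinct_subsets_of_card)

lemma dropout_trees_cone:
  assumes "finite_graph R" and "u \<notin> verts R" and "2 \<le> d"
    and "distinct xs" and "set xs = verts R"
  shows "dropout_trees (cone u R) u d k =
    {#unfold_tree d (del_nodes (cone u R) S) u. S \<in># mset (subsets_of_card k xs)#}"
proof -
  have "verts (cone u R) - {u} = set xs"
    using assms(2,5) by auto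
  then show ?thesis
    using assms(1-3)
    by (simp add: dropout_trees_def nbhd_cone mset_set_subsets_of_card[OF assms(4)])
qed

definition two_pentagons :: "nat graph" where
  "two_pentagons = graph_union (cycle_graph 1 5) (cycle_graph 6 5)"

definition decagon :: "nat graph" where
  "decagon = cycle_graph 1 10"

lemma finite_graph_two_pentagons: "finite_graph two_pentagons"
  unfolding two_pentagons_def by (intro finite_graph_union finite_graph_cycle_graph) simp_all

lemma finite_graph_decagon: "finite_graph decagon"
  unfolding decagon_def by (rule finite_graph_cycle_graph) simp

lemma verts_two_pentagons: "verts two_pentagons = {1..<11}"
  by (auto simp: two_pentagons_def)

lemma verts_decagon: "verts decagon = {1..<11}"
  by (simp add: decagon_def)

lemma not_rooted_iso_wheels: "\<not> rooted_iso (cone 0 two_pentagons) 0 (cone 0 decagon) 0"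
proof
  assume iso: "rooted_iso (cone 0 two_pentagons) 0 (cone 0 decagon) 0"
  have "bipartite_on decagon (verts decagon)"
    using bipartite_cycle_graph[of 10 1] by (simp add: decagon_def)
  then have "bipartite_on (cone 0 decagon) (verts (cone 0 decagon) - {0})"
    using bipartite_on_cone[of 0 decagon] by (simp add: verts_decagon)
  then have "bipartite_on (cone 0 two_pentagons) (verts (cone 0 two_pentagons) - {0})"
    using rooted_iso_bipartite_off_root[OF iso] by simp
  moreover have "\<not> bipartite_on (cone 0 two_pentagons) (verts (cone 0 two_pentagons) - {0})"
    by (rule pentagon_not_bipartite[of 1 2 3 4 5])
      (auto simp: two_pentagons_def adj_cycle_graph cycle_succ_def)
  ultimately show False by contradiction
qed

lemma dropout_trees_wheels:
  assumes "k \<in> {1, 2}"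
  shows "dropout_trees (cone 0 two_pentagons) 0 2 k = dropout_trees (cone 0 decagon) 0 2 k"
proof -
  have rim_dropouts: "dropout_trees (cone 0 R) 0 2 k =
      {#unfold_tree 2 (del_nodes (cone 0 R) S) 0. S \<in># mset (subsets_of_card k [1..<11])#}"
    if "finite_graph R" and "verts R = {1..<11}" for R
    by (rule dropout_trees_cone) (use that in simp_all)
  have "\<forall>k\<in>{1, 2}.
      {#unfold_tree 2 (del_nodes (cone 0 two_pentagons) S) 0. S \<in># mset (subsets_of_card k [1..<11])#} =
      {#unfold_tree 2 (del_nodes (cone 0 decagon) S) 0. S \<in># mset (subsets_of_card k [1..<11])#}"
    unfolding two_pentagons_def decagon_def by code_simp
  from bspec[OF this assms] show ?thesis
    using rim_dropouts[OF finite_graph_two_pentagons verts_two_pentagons]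
      rim_dropouts[OF finite_graph_decagon verts_decagon]
    by simp
qed

theorem theorem3:
  shows "\<exists>(d::nat) (G1::nat graph) (G2::nat graph) u1 u2.
     d \<ge> 1 \<and> finite_graph G1 \<and> finite_graph G2
     \<and> u1 \<in> verts G1 \<and> u2 \<in> verts G2
     \<and> \<not> rooted_iso (nbhd G1 u1 d) u1 (nbhd G2 u2 d) u2
     \<and> (\<forall>k\<in>{1, 2}. dropout_trees G1 u1 d k = dropout_trees G2 u2 d k)"
proof -
  have rims: "finite_graph two_pentagons" "finite_graph decagon"
    "0 \<notin> verts two_pentagons" "0 \<notin> verts decagon"
    using finite_graph_two_pentagons finite_graph_decagon
    by (simp_all add: verts_two_pentagons verts_decagon)
  have "\<not> rooted_iso (nbhd (cone 0 two_pentagons) 0 2) 0 (nbhd (cone 0 decagon) 0 2) 0"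
    using not_rooted_iso_wheels by (simp add: nbhd_cone rims)
  then show ?thesis
    using dropout_trees_wheels finite_graph_cone[OF rims(1,3)] finite_graph_cone[OF rims(2,4)]
    by (intro exI[of _ "2::nat"] exI[of _ "cone 0 two_pentagons"] exI[of _ "cone 0 decagon"]
        exI[of _ "0::nat"]) auto
qed

end
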